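(* Let $(X,\le)$ be a partially ordered set, and for $x\in X$ let $K_x=\{y\in X: y\le x\}$. Let $\tau_\le$ be the topology on $X$ generated by the sets $K_x$ and $X\setminus K_x$, $x\in X$. The following are equivalent: (i) $(X,\tau_\le)$ is compact; (ii) $(X,\le)$ satisfies the descending chain condition (every decreasing sequence $x_1\ge x_2\ge\dots$ is eventually constant), there is a finite $F\subset X$ with $X=\bigcup_{x\in F}K_x$, and for any $x,y\in X$ there is a finite $F(x,y)\subset X$ with $K_x\cap K_y=\bigcup_{z\in F(x,y)}K_z$. *)

theory Defs
  imports "HOL-Analysis.Analysis"
begin

definition downset :: "'a::order \<Rightarrow> 'a set" where
  "downset x = {y. y \<le> x}"

definition order_tau :: "'a::order topology" where
  "order_tau = topology_generated_by (range downset \<union> range (\<lambda>x. UNIV - downset x))"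

definition dcc :: "'a::order itself \<Rightarrow> bool" where
  "dcc _ \<longleftrightarrow> (\<forall>f :: nat \<Rightarrow> 'a. (\<forall>n. f (Suc n) \<le> f n) \<longrightarrow> (\<exists>N. \<forall>n\<ge>N. f n = f N))"

end

theory Submission
  imports Defs
begin

text \<open>
  The sets \<open>K\<^sub>x\<close> are clopen. If \<open>\<tau>\<^sub>\<le>\<close> is compact, every closed down-set is compact and
  is covered by the open sets \<open>K\<^sub>y\<close> it contains, hence is a finite union of them; this gives
  the finite cover of \<open>X\<close> and the finiteness of \<open>K\<^sub>x \<inter> K\<^sub>y\<close>. For a decreasing sequence
  \<open>x\<^sub>n\<close>, the set \<open>L\<close> of its lower bounds is then open as well, so the closed sets
  \<open>K\<^bsub>x\<^sub>n\<^esub> - L\<close> form a decreasing sequence with empty intersection; one of them is empty,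
  i.e. some \<open>x\<^sub>N\<close> is a lower bound of the sequence.

  Conversely, by Alexander's subbase theorem it suffices to extract finite subcovers from
  covers by sets \<open>K\<^sub>a\<close> and \<open>X - K\<^sub>b\<close>. By well-founded induction every \<open>K\<^sub>z\<close> is finitely
  covered: if \<open>z \<in> X - K\<^sub>b\<close>, then \<open>K\<^sub>z \<subseteq> (X - K\<^sub>b) \<union> (K\<^sub>z \<inter> K\<^sub>b)\<close>, and \<open>K\<^sub>z \<inter> K\<^sub>b\<close> is a
  finite union of sets \<open>K\<^sub>w\<close> with \<open>w < z\<close>.
\<close>

lemma topology_generated_by_eq_subbase:
  "topology_generated_by \<S> =
     topology (arbitrary union_of (finite intersection_of (\<lambda>S. S \<in> \<S>) relative_to \<Union>\<S>))"
proof (subst topology_eq, intro allI iffI)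
  fix S
  assume "openin (topology_generated_by \<S>) S"
  then have "generate_topology_on \<S> S"
    by (rule openin_topology_generated_by)
  moreover have "(arbitrary union_of (finite intersection_of (\<lambda>S. S \<in> \<S>) relative_to \<Union>\<S>)) T"
    if "T \<in> \<S>" for T
    using that by (intro arbitrary_union_of_inc relative_to_subset_inc)
      (auto intro: finite_intersection_of_inc)
  ultimately show "openin (topology (arbitrary union_of
      (finite intersection_of (\<lambda>S. S \<in> \<S>) relative_to \<Union>\<S>))) S"
    unfolding openin_subbase
    by (rule generate_topology_on_coarsest[OF istopology_subbase, rotated])
next
  fix S
  assume S: "openin (topology (arbitrary union_of
      (finite intersection_of (\<lambda>S. S \<in> \<S>) relative_to \<Union>\<S>))) S"
  have Basis: "\<And>T. T \<in> \<S> \<Longrightarrow> openin (topology_generated_by \<S>) T"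
    by (rule topology_generated_by_Basis)
  have U: "openin (topology_generated_by \<S>) (\<Union>\<S>)"
    using openin_topspace[of "topology_generated_by \<S>"] by simp
  show "openin (topology_generated_by \<S>) S"
    by (rule minimal_topology_subbase[OF Basis U S])
qed

lemma compact_space_topology_generated_by:
  assumes "\<And>\<C>. \<C> \<subseteq> \<S> \<Longrightarrow> \<Union>\<C> = \<Union>\<S> \<Longrightarrow> \<exists>\<C>'. finite \<C>' \<and> \<C>' \<subseteq> \<C> \<and> \<Union>\<C>' = \<Union>\<S>"
  shows "compact_space (topology_generated_by \<S>)"
  by (rule Alexander_subbase[OF topology_generated_by_eq_subbase[symmetric]])
    (use assms in simp)

lemma mem_downset_iff [simp]: "y \<in> downset x \<longleftrightarrow> y \<le> x"
  by (simp add: downset_def)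

lemma topspace_order_tau [simp]: "topspace order_tau = UNIV"
  unfolding order_tau_def topology_generated_by_topspace by auto

lemma openin_order_tau_downset: "openin order_tau (downset x)"
  unfolding order_tau_def by (rule topology_generated_by_Basis) auto

lemma closedin_order_tau_downset: "closedin order_tau (downset x)"
proof -
  have "openin order_tau (UNIV - downset x)"
    unfolding order_tau_def by (rule topology_generated_by_Basis) auto
  then show ?thesis
    by (simp add: closedin_def)
qed

lemma dcc_imp_wf:
  assumes "dcc TYPE('a::order)"
  shows "wf {(x, y :: 'a). x < y}"
proof (rule ccontr)
  assume "\<not> wf {(x, y :: 'a). x < y}"
  then have "\<exists>f. \<forall>n. (f (Suc n), f n) \<in> {(x, y :: 'a). x < y}"
    by (simp only: wf_iff_no_infinite_down_chain not_not)
  then obtain f :: "nat \<Rightarrow> 'a" where f: "\<And>n. f (Suc n) < f n"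
    by blast
  then have "\<And>n. f (Suc n) \<le> f n"
    by (simp add: less_imp_le)
  then have "\<exists>N. \<forall>n\<ge>N. f n = f N"
    by (rule assms[unfolded dcc_def, rule_format])
  then obtain N where "\<forall>n\<ge>N. f n = f N" ..
  then have "N \<le> Suc N \<longrightarrow> f (Suc N) = f N"
    by (rule spec)
  then have "f (Suc N) = f N"
    by simp
  with f[of N] show False
    by simp
qed

lemma downset_finite_subcover:
  fixes \<C> :: "'a::order set set"
  assumes wf: "wf {(x, y :: 'a). x < y}"
    and meet: "\<And>x y :: 'a. \<exists>F. finite F \<and> downset x \<inter> downset y = (\<Union>w\<in>F. downset w)"
    and \<C>: "\<C> \<subseteq> range downset \<union> range (\<lambda>b. UNIV - downset b)" "\<Union>\<C> = UNIV"
  shows "\<exists>\<C>'. finite \<C>' \<and> \<C>' \<subseteq> \<C> \<and> downset z \<subseteq> \<Union>\<C>'"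
  using wf
proof (induction z rule: wf_induct_rule)
  case (less z)
  have "z \<in> \<Union>\<C>"
    using \<C>(2) by simp
  then obtain c where c: "c \<in> \<C>" "z \<in> c"
    by blast
  with \<C>(1) consider a where "c = downset a" | b where "c = UNIV - downset b"
    by blast
  then show ?case
  proof cases
    case (1 a)
    then have "downset z \<subseteq> c"
      using c(2) by (auto intro: order_trans)
    with c(1) show ?thesis
      by (intro exI[of _ "{c}"]) auto
  next
    case (2 b)
    obtain F where F: "finite F" "downset z \<inter> downset b = (\<Union>w\<in>F. downset w)"
      using meet by blast
    have "w < z" if "w \<in> F" for w
    proof -
      have "w \<in> downset z \<inter> downset b"
        unfolding F(2) using that by auto
      moreover have "\<not> z \<le> b"
        using c(2) 2 by simp
      ultimately show ?thesis
        by (auto simp: order.strict_iff_order)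
    qed
    then have "\<forall>w\<in>F. \<exists>\<C>'. finite \<C>' \<and> \<C>' \<subseteq> \<C> \<and> downset w \<subseteq> \<Union>\<C>'"
      using less.IH by simp
    then obtain \<G> where \<G>: "\<forall>w\<in>F. finite (\<G> w) \<and> \<G> w \<subseteq> \<C> \<and> downset w \<subseteq> \<Union>(\<G> w)"
      by (rule bchoice[THEN exE])
    have "downset z \<subseteq> c \<union> (downset z \<inter> downset b)"
      using 2 by blast
    also have "\<dots> \<subseteq> c \<union> (\<Union>w\<in>F. \<Union>(\<G> w))"
      unfolding F(2) using \<G> by (intro Un_mono UN_mono) auto
    finally have "downset z \<subseteq> \<Union>(insert c (\<Union>w\<in>F. \<G> w))"
      by auto
    moreover have "finite (insert c (\<Union>w\<in>F. \<G> w))" "insert c (\<Union>w\<in>F. \<G> w) \<subseteq> \<C>"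
      using F(1) \<G> c(1) by auto
    ultimately show ?thesis
      by blast
  qed
qed

lemma compact_space_order_tauI:
  assumes dcc: "dcc TYPE('a::order)"
    and cover: "\<exists>F :: 'a set. finite F \<and> UNIV = (\<Union>x\<in>F. downset x)"
    and meet: "\<And>x y :: 'a. \<exists>F. finite F \<and> downset x \<inter> downset y = (\<Union>w\<in>F. downset w)"
  shows "compact_space (order_tau :: 'a topology)"
  unfolding order_tau_def
proof (rule compact_space_topology_generated_by)
  have subbase_UNIV: "\<Union>(range downset \<union> range (\<lambda>b. UNIV - downset b)) = (UNIV :: 'a set)"
    by auto
  fix \<C> :: "'a set set"
  assume \<C>: "\<C> \<subseteq> range downset \<union> range (\<lambda>b. UNIV - downset b)"
    "\<Union>\<C> = \<Union>(range downset \<union> range (\<lambda>b. UNIV - downset b))"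
  from cover obtain F :: "'a set" where "finite F \<and> UNIV = (\<Union>x\<in>F. downset x)" ..
  then have F: "finite F" "(\<Union>x\<in>F. downset x) = UNIV"
    by simp_all
  have "\<Union>\<C> = UNIV"
    using \<C>(2) subbase_UNIV by simp
  then have "\<forall>x. \<exists>\<C>'. finite \<C>' \<and> \<C>' \<subseteq> \<C> \<and> downset x \<subseteq> \<Union>\<C>'"
    using downset_finite_subcover[OF dcc_imp_wf[OF dcc] meet \<C>(1)] by blast
  then obtain \<G> where \<G>: "\<And>x. finite (\<G> x)" "\<And>x. \<G> x \<subseteq> \<C>" "\<And>x. downset x \<subseteq> \<Union>(\<G> x)"
    by metis
  have "finite (\<Union>x\<in>F. \<G> x)" "(\<Union>x\<in>F. \<G> x) \<subseteq> \<C>"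
    using F(1) \<G>(1,2) by auto
  moreover have "(\<Union>x\<in>F. downset x) \<subseteq> (\<Union>x\<in>F. \<Union>(\<G> x))"
    using \<G>(3) by (intro UN_mono) auto
  then have "\<Union>(\<Union>x\<in>F. \<G> x) = UNIV"
    unfolding F(2) by blast
  ultimately show "\<exists>\<C>'. finite \<C>' \<and> \<C>' \<subseteq> \<C> \<and> \<Union>\<C>' = \<Union>(range downset \<union> range (\<lambda>b. UNIV - downset b))"
    unfolding subbase_UNIV by blast
qed

lemma closedin_down_closed_eq_finite_Union:
  fixes S :: "'a::order set"
  assumes "compact_space (order_tau :: 'a::order topology)" "closedin order_tau S"
    and down: "\<And>x y. x \<in> S \<Longrightarrow> y \<le> x \<Longrightarrow> y \<in> S"
  shows "\<exists>F \<subseteq> S. finite F \<and> S = (\<Union>x\<in>F. downset x)"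
proof -
  have "compactin order_tau S"
    using assms(1,2) by (rule closedin_compact_space)
  moreover have "\<forall>U \<in> downset ` S. openin order_tau U" "S \<subseteq> \<Union>(downset ` S)"
    by (auto simp: openin_order_tau_downset)
  ultimately obtain \<F> where \<F>: "finite \<F>" "\<F> \<subseteq> downset ` S" "S \<subseteq> \<Union>\<F>"
    unfolding compactin_def by blast
  obtain F where F: "F \<subseteq> S" "finite F" "\<F> = downset ` F"
    using finite_subset_image[OF \<F>(1,2)] by blast
  have "S \<subseteq> (\<Union>x\<in>F. downset x)"
    using \<F>(3) F(3) by simp
  moreover have "(\<Union>x\<in>F. downset x) \<subseteq> S"
    using F(1) down by auto
  ultimately show ?thesis
    using F(1,2) by blast
qed

lemma compact_order_tau_imp_cover:
  assumes "compact_space (order_tau :: 'a::order topology)"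
  shows "\<exists>F :: 'a set. finite F \<and> UNIV = (\<Union>x\<in>F. downset x)"
  using closedin_down_closed_eq_finite_Union[OF assms closedin_topspace[of order_tau, unfolded topspace_order_tau]]
  by blast

lemma compact_order_tau_imp_meet:
  assumes "compact_space (order_tau :: 'a::order topology)"
  shows "\<exists>F. finite F \<and> downset x \<inter> downset y = (\<Union>z\<in>F. downset (z :: 'a))"
proof -
  have "closedin order_tau (downset x \<inter> downset y)"
    by (simp add: closedin_Int closedin_order_tau_downset)
  moreover have "v \<in> downset x \<inter> downset y" if "w \<in> downset x \<inter> downset y" "v \<le> w" for v w
    using that by (auto intro: order_trans)
  ultimately have "\<exists>F \<subseteq> downset x \<inter> downset y. finite F \<and> downset x \<inter> downset y = (\<Union>z\<in>F. downset z)"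
    by (rule closedin_down_closed_eq_finite_Union[OF assms])
  then show ?thesis
    by blast
qed

lemma compact_order_tau_imp_dcc:
  assumes compact: "compact_space (order_tau :: 'a::order topology)"
  shows "dcc TYPE('a)"
  unfolding dcc_def
proof (intro allI impI)
  fix f :: "nat \<Rightarrow> 'a"
  assume "\<forall>n. f (Suc n) \<le> f n"
  then have dec: "f (Suc n) \<le> f n" for n
    by simp
  define L where "L = (\<Inter>n. downset (f n))"
  have "closedin order_tau L"
    unfolding L_def by (auto intro: closedin_order_tau_downset)
  moreover have "v \<in> L" if "w \<in> L" "v \<le> w" for v w
    using that unfolding L_def by (auto intro: order_trans)
  ultimately have "\<exists>F \<subseteq> L. finite F \<and> L = (\<Union>x\<in>F. downset x)"
    by (rule closedin_down_closed_eq_finite_Union[OF compact])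
  then have "openin order_tau L"
    by (auto intro: openin_order_tau_downset)
  then have "closedin order_tau (downset (f n) - L)" for n
    by (simp add: closedin_diff closedin_order_tau_downset)
  moreover have "decseq (\<lambda>n. downset (f n) - L)"
    by (intro decseq_SucI) (auto intro: order_trans[OF _ dec])
  moreover have "(\<Inter>n. downset (f n) - L) = {}"
    unfolding L_def by blast
  ultimately have "\<not> (\<forall>n. downset (f n) - L \<noteq> {})"
    using compact_space_imp_nest[OF compact, of "\<lambda>n. downset (f n) - L"] by blast
  then obtain N where "downset (f N) - L = {}"
    by blast
  then have "f N \<in> L"
    by auto
  show "\<exists>N. \<forall>n\<ge>N. f n = f N"
  proof (intro exI allI impI)
    fix n
    assume "N \<le> n"
    have "decseq f"
      using dec by (simp add: decseq_Suc_iff)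
    then have "f n \<le> f N"
      using \<open>N \<le> n\<close> by (rule decseqD)
    moreover have "f N \<le> f n"
      using \<open>f N \<in> L\<close> by (simp add: L_def)
    ultimately show "f n = f N"
      by (rule antisym)
  qed
qed

theorem proposition3p12:
  "compact_space (order_tau :: 'a::order topology) \<longleftrightarrow>
     (dcc TYPE('a) \<and>
      (\<exists>F :: 'a set. finite F \<and> UNIV = (\<Union>x\<in>F. downset x)) \<and>
      (\<forall>x y :: 'a. \<exists>F. finite F \<and> downset x \<inter> downset y = (\<Union>z\<in>F. downset z)))"
proof
  assume "compact_space (order_tau :: 'a topology)"
  then show "dcc TYPE('a) \<and>
      (\<exists>F :: 'a set. finite F \<and> UNIV = (\<Union>x\<in>F. downset x)) \<and>
      (\<forall>x y :: 'a. \<exists>F. finite F \<and> downset x \<inter> downset y = (\<Union>z\<in>F. downset z))"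
    by (intro conjI allI compact_order_tau_imp_dcc compact_order_tau_imp_cover
        compact_order_tau_imp_meet)
next
  assume "dcc TYPE('a) \<and>
      (\<exists>F :: 'a set. finite F \<and> UNIV = (\<Union>x\<in>F. downset x)) \<and>
      (\<forall>x y :: 'a. \<exists>F. finite F \<and> downset x \<inter> downset y = (\<Union>z\<in>F. downset z))"
  then show "compact_space (order_tau :: 'a topology)"
    by (elim conjE) (rule compact_space_order_tauI; blast)
qed

end
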